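(* Let $\Lambda\in\mathbb{R}$, $\mathfrak{e}>0$, $\mathfrak{q}\in(0,1]$, $r_+>0$, $Q_{\max}>0$ and $K>0$, and assume $\Lambda r_+^2<3$. Let $r\in C^1([0,1];(0,\infty))$, $Q\in C^0([0,1];\mathbb{R})$ and $h\in C^1([0,1];\mathbb{R})$ satisfy: (i) $r_+/2\le r(V)\le r_+$ for all $V\in[0,1]$; (ii) $|Q(V)|\le \mathfrak{q}\,Q_{\max}$ for all $V\in[0,1]$; (iii) $\partial_V\big(r\,h\big)=-\tfrac14\Big(1-\tfrac{Q^2}{r^2}-\Lambda r^2\Big)$ on $[0,1]$; (iv) $\partial_V r(0)>0$ and $h(0)=\dfrac{\Lambda r(0)^2/3-1}{4\,\partial_V r(0)}$; (v) $\partial_V r(0)\le K\,\mathfrak{q}/\mathfrak{e}$. Then there exists a constant $C>0$ depending only on $K$, $\Lambda r_+^2$ and $Q_{\max}/r_+$ such that, if $\dfrac{\mathfrak{e}\,r_+^2}{\mathfrak{q}\,Q_{\max}}>C$, then $\sup_{V\in[0,1]} h(V)<0$.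
   Context: This abstracts the setting of characteristic gluing for the spherically symmetric Einstein–Maxwell–massless charged scalar field system with cosmological constant $\Lambda$, with metric $-\Omega^2\,dU\,dV+r^2d\omega^2$ in the gauge $\Omega\equiv1$ on the outgoing null cone $\{U=0,\ V\in[0,1]\}$. There $r(V)$ is the area radius along the cone, $h(V)=\partial_U r(0,V)$ is its transverse derivative, $Q(V)$ is the enclosed charge, $\mathfrak{e}$ is the scalar field's charge, $r_+$ is the horizon radius of the target Reissner–Nordström(-(A)dS) black hole, whose charge is $\mathfrak{q}Q_{\max}$ with $Q_{\max}$ the maximal (extremal) charge for its mass and $\Lambda$. Equation (iii) is the wave equation for $r$ (with zero scalar mass) rewritten in terms of $r\,\partial_U r$; condition (iv) expresses vanishing Hawking mass $m=\tfrac r2\big(1+4\partial_Ur\,\partial_Vr/\Omega^2-\Lambda r^2/3\big)$ at the initial sphere $V=0$. The conclusion means there are no antitrapped spheres on the cone. *)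

theory Defs
  imports "HOL-Analysis.Analysis"
begin

end

theory Submission
  imports Defs
begin

text \<open>
  Along the cone the quantity \<open>r h\<close> grows at most linearly: the source term of the wave
  equation for \<open>r\<close> is bounded above by \<open>M = (Q\<^sub>m\<^sub>a\<^sub>x/r\<^sub>+)\<^sup>2 + \<bar>\<Lambda> r\<^sub>+\<^sup>2\<bar>/4\<close>, using only
  \<open>r\<^sub>+/2 \<le> r \<le> r\<^sub>+\<close> and \<open>\<bar>Q\<bar> \<le> Q\<^sub>m\<^sub>a\<^sub>x\<close>. At the initial sphere the vanishing of the Hawking
  mass gives \<open>r h = r (\<Lambda> r\<^sup>2/3 - 1) / (4 \<partial>\<^sub>V r)\<close>, and since \<open>1 - \<Lambda> r\<^sup>2/3\<close> is bounded away from
  zero while \<open>\<partial>\<^sub>V r(0) \<le> K q/e\<close> is small, this is at most a negative multiple of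
  \<open>e r\<^sub>+\<^sup>2/(q Q\<^sub>m\<^sub>a\<^sub>x)\<close>. Once that ratio is large, \<open>r h\<close> starts below \<open>-(M + 1)\<close> and
  therefore stays below \<open>-1\<close> on \<open>[0,1]\<close>, so \<open>h \<le> -1/r\<^sub>+\<close> throughout. Only the
  differentiability of \<open>r h\<close> enters.
\<close>

lemma has_real_derivative_bounded_imp_le_linear:
  fixes f D :: "real \<Rightarrow> real"
  assumes deriv: "\<And>x. x \<in> {a..b} \<Longrightarrow> (f has_real_derivative D x) (at x within {a..b})"
    and bound: "\<And>x. x \<in> {a..b} \<Longrightarrow> D x \<le> M"
    and x: "x \<in> {a..b}"
  shows "f x \<le> f a + M * (x - a)"
proof -
  have "\<exists>y\<in>{a..x}. f x - f a = D y * (x - a)"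
  proof (rule mvt_very_simple)
    show "a \<le> x" using x by simp
    fix y assume "a \<le> y" "y \<le> x"
    then have "(f has_real_derivative D y) (at y within {a..b})" using deriv x by auto
    then have "(f has_real_derivative D y) (at y within {a..x})"
      by (rule DERIV_subset) (use x in auto)
    then show "(f has_derivative (\<lambda>t. D y * t)) (at y within {a..x})"
      by (simp add: has_field_derivative_def)
  qed
  then obtain y where y: "y \<in> {a..x}" "f x - f a = D y * (x - a)" by auto
  have "D y * (x - a) \<le> M * (x - a)"
    using bound[of y] y x by (intro mult_right_mono) auto
  then show ?thesis using y by simp
qed

lemma Sup_lt_zero_if_rh_initially_negative:
  fixes r h D :: "real \<Rightarrow> real"
  assumes deriv: "\<And>V. V \<in> {0..1} \<Longrightarrow> ((\<lambda>x. r x * h x) has_real_derivative D V) (at V within {0..1})"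
    and D_le: "\<And>V. V \<in> {0..1} \<Longrightarrow> D V \<le> M" and "M \<ge> 0"
    and initial: "r 0 * h 0 + M < 0"
    and r_pos: "\<And>V. V \<in> {0..1} \<Longrightarrow> 0 < r V"
    and r_le: "\<And>V. V \<in> {0..1} \<Longrightarrow> r V \<le> rp"
  shows "(SUP V\<in>{0..1}. h V) < 0"
proof -
  define \<delta> where "\<delta> = - (r 0 * h 0 + M)"
  have "\<delta> > 0" using initial by (simp add: \<delta>_def)
  have h_le: "h V \<le> - \<delta> / rp" if V: "V \<in> {0..1}" for V
  proof -
    have "r V * h V \<le> r 0 * h 0 + M * V"
      using has_real_derivative_bounded_imp_le_linear[OF deriv D_le V] by simp
    also have "\<dots> \<le> - \<delta>"
      using V \<open>M \<ge> 0\<close> mult_left_le[of V M] by (auto simp: \<delta>_def)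
    finally have rh: "r V * h V \<le> - \<delta>" .
    have "h V < 0"
    proof (rule ccontr)
      assume "\<not> h V < 0"
      then have "0 \<le> r V * h V" using r_pos[OF V] by simp
      with rh \<open>\<delta> > 0\<close> show False by simp
    qed
    then have "rp * h V \<le> r V * h V" using r_le[OF V] by (intro mult_right_mono_neg) auto
    with rh have "rp * h V \<le> - \<delta>" by linarith
    moreover have "rp > 0" using r_pos[of 0] r_le[of 0] by simp
    ultimately show ?thesis by (simp add: field_simps)
  qed
  have "(SUP V\<in>{0..1}. h V) \<le> - \<delta> / rp"
    by (rule cSUP_least) (use h_le in auto)
  also have "\<dots> < 0" using \<open>\<delta> > 0\<close> r_pos[of 0] r_le[of 0] by (simp add: divide_pos_pos)
  finally show ?thesis .
qed

lemma wave_source_le: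
  fixes \<Lambda> r Q rp s :: real
  assumes r: "rp / 2 \<le> r" "r \<le> rp" and Q: "\<bar>Q\<bar> \<le> s * rp" and "rp > 0"
  shows "- (1/4) * (1 - Q\<^sup>2 / r\<^sup>2 - \<Lambda> * r\<^sup>2) \<le> s\<^sup>2 + \<bar>\<Lambda> * rp\<^sup>2\<bar> / 4"
proof -
  have "r > 0" using r \<open>rp > 0\<close> by simp
  have "s \<ge> 0"
  proof (rule ccontr)
    assume "\<not> s \<ge> 0"
    then have "s * rp < 0" using \<open>rp > 0\<close> by (simp add: mult_neg_pos)
    with Q show False by simp
  qed
  have "s * rp \<le> s * (2 * r)" using r \<open>s \<ge> 0\<close> by (intro mult_left_mono) auto
  with Q have "\<bar>Q\<bar> \<le> s * (2 * r)" by linarith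
  then have "\<bar>Q\<bar>\<^sup>2 \<le> (s * (2 * r))\<^sup>2" by (intro power_mono) auto
  then have charge: "Q\<^sup>2 / r\<^sup>2 \<le> 4 * s\<^sup>2"
    using \<open>r > 0\<close> by (simp add: divide_le_eq power_mult_distrib)
  have "r\<^sup>2 \<le> rp\<^sup>2" using r \<open>r > 0\<close> by (intro power_mono) auto
  then have "\<bar>\<Lambda>\<bar> * r\<^sup>2 \<le> \<bar>\<Lambda> * rp\<^sup>2\<bar>" by (simp add: abs_mult mult_left_mono)
  moreover have "\<Lambda> * r\<^sup>2 \<le> \<bar>\<Lambda>\<bar> * r\<^sup>2" by (simp add: mult_right_mono)
  ultimately have cosmological: "\<Lambda> * r\<^sup>2 \<le> \<bar>\<Lambda> * rp\<^sup>2\<bar>" by linarith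
  have "- (1/4) * (1 - a - b) \<le> s\<^sup>2 + B / 4" if "a \<le> 4 * s\<^sup>2" "b \<le> B" for a b B :: real
    using that by (simp add: field_simps)
  from this[OF charge cosmological] show ?thesis .
qed

lemma initial_rh_le:
  fixes \<Lambda> r0 dr0 rp K q e :: real
  assumes r0: "rp / 2 \<le> r0" "r0 \<le> rp" and "rp > 0"
    and dr0: "0 < dr0" "dr0 \<le> K * q / e" and "K > 0" "q > 0" "e > 0"
    and "\<Lambda> * rp\<^sup>2 \<le> 3"
  shows "r0 * ((\<Lambda> * r0\<^sup>2 / 3 - 1) / (4 * dr0))
           \<le> - ((1 - max (\<Lambda> * rp\<^sup>2) 0 / 3) / (8 * K)) * (e * rp / q)"
proof -
  define c where "c = 1 - max (\<Lambda> * rp\<^sup>2) 0 / 3"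
  have "c \<ge> 0" using \<open>\<Lambda> * rp\<^sup>2 \<le> 3\<close> by (simp add: c_def)
  have "\<Lambda> * r0\<^sup>2 \<le> max (\<Lambda> * rp\<^sup>2) 0"
  proof (cases "\<Lambda> \<ge> 0")
    case True
    have "r0\<^sup>2 \<le> rp\<^sup>2" using r0 \<open>rp > 0\<close> by (intro power_mono) auto
    with True show ?thesis by (simp add: mult_left_mono le_max_iff_disj)
  next
    case False
    then show ?thesis by (simp add: mult_nonpos_nonneg le_max_iff_disj)
  qed
  then have num: "\<Lambda> * r0\<^sup>2 / 3 - 1 \<le> - c" by (simp add: c_def)
  have "r0 * ((\<Lambda> * r0\<^sup>2 / 3 - 1) / (4 * dr0)) = r0 * (\<Lambda> * r0\<^sup>2 / 3 - 1) / (4 * dr0)"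
    by simp
  also have "\<dots> \<le> r0 * (- c) / (4 * dr0)"
    using num r0 \<open>rp > 0\<close> dr0 by (intro divide_right_mono mult_left_mono) auto
  also have "\<dots> \<le> (rp / 2) * (- c) / (4 * (K * q / e))"
  proof -
    have "(rp / 2) * c / (4 * (K * q / e)) \<le> r0 * c / (4 * dr0)"
      using r0 dr0 \<open>c \<ge> 0\<close> \<open>rp > 0\<close> by (intro frac_le mult_right_mono) auto
    then show ?thesis by simp
  qed
  also have "\<dots> = - (c / (8 * K)) * (e * rp / q)"
    using \<open>K > 0\<close> \<open>q > 0\<close> \<open>e > 0\<close> by (simp add: field_simps)
  finally show ?thesis by (simp add: c_def)
qed

definition charge_ratio_threshold :: "real \<Rightarrow> real \<Rightarrow> real \<Rightarrow> real" where
  "charge_ratio_threshold K L s = 8 * K * (s\<^sup>2 + \<bar>L\<bar> / 4 + 1) / (s * (1 - max L 0 / 3))"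

lemma charge_ratio_threshold_pos:
  assumes "K > 0" "L < 3" "s > 0"
  shows "charge_ratio_threshold K L s > 0"
proof -
  have "0 < s\<^sup>2 + \<bar>L\<bar> / 4 + 1" using zero_le_power2[of s] abs_ge_zero[of L] by linarith
  then have "8 * K * (s\<^sup>2 + \<bar>L\<bar> / 4 + 1) > 0" using \<open>K > 0\<close> by simp
  moreover have "s * (1 - max L 0 / 3) > 0" using assms by (simp add: max_def)
  ultimately show ?thesis by (simp add: charge_ratio_threshold_def)
qed

lemma Sup_lt_zero_if_charge_ratio_large:
  fixes \<Lambda> e q rp Qmax K L s :: real and r r' Q h :: "real \<Rightarrow> real"
  assumes "K > 0" "L < 3" "s > 0"
    and "e > 0" "0 < q" "q \<le> 1" "rp > 0" "Qmax > 0"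
    and L: "\<Lambda> * rp\<^sup>2 = L" and s: "Qmax / rp = s"
    and r_bounds: "\<forall>V\<in>{0..1}. rp / 2 \<le> r V \<and> r V \<le> rp"
    and Q_bound: "\<forall>V\<in>{0..1}. \<bar>Q V\<bar> \<le> q * Qmax"
    and wave: "\<forall>V\<in>{0..1}. ((\<lambda>x. r x * h x) has_real_derivative
          (- (1/4) * (1 - (Q V)\<^sup>2 / (r V)\<^sup>2 - \<Lambda> * (r V)\<^sup>2))) (at V within {0..1})"
    and r'0: "r' 0 > 0" and h0: "h 0 = (\<Lambda> * (r 0)\<^sup>2 / 3 - 1) / (4 * r' 0)"
    and r'0_le: "r' 0 \<le> K * q / e"
    and large: "e * rp\<^sup>2 / (q * Qmax) > charge_ratio_threshold K L s"
  shows "(SUP V\<in>{0..1}. h V) < 0"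
proof -
  define M where "M = s\<^sup>2 + \<bar>L\<bar> / 4"
  define c where "c = 1 - max L 0 / 3"
  have "c > 0" using \<open>L < 3\<close> by (simp add: c_def max_def)
  have Qmax: "Qmax = s * rp" using s \<open>rp > 0\<close> by (simp add: field_simps)
  have source_le: "- (1/4) * (1 - (Q V)\<^sup>2 / (r V)\<^sup>2 - \<Lambda> * (r V)\<^sup>2) \<le> M"
    if V: "V \<in> {0..1}" for V
  proof -
    have "q * Qmax \<le> Qmax" using \<open>q \<le> 1\<close> \<open>Qmax > 0\<close> by simp
    with Q_bound V Qmax have "\<bar>Q V\<bar> \<le> s * rp" by fastforce
    then show ?thesis
      using wave_source_le r_bounds V \<open>rp > 0\<close> L by (auto simp: M_def)
  qed
  have "r 0 * h 0 \<le> - (c / (8 * K)) * (e * rp / q)"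
    using initial_rh_le[of rp "r 0" "r' 0" K q e \<Lambda>] r_bounds r'0 r'0_le h0 L assms(1-7)
    by (simp add: c_def)
  also have "\<dots> < - (c / (8 * K)) * (charge_ratio_threshold K L s * s)"
  proof -
    have ratio: "e * rp\<^sup>2 / (q * Qmax) = (e * rp / q) / s"
      using Qmax \<open>rp > 0\<close> by (simp add: power2_eq_square)
    have "charge_ratio_threshold K L s < (e * rp / q) / s" using large unfolding ratio .
    then have "charge_ratio_threshold K L s * s < e * rp / q"
      using \<open>s > 0\<close> by (simp only: pos_less_divide_eq)
    then have "c / (8 * K) * (charge_ratio_threshold K L s * s) < c / (8 * K) * (e * rp / q)"
      using \<open>c > 0\<close> \<open>K > 0\<close> by (intro mult_strict_left_mono) auto
    then show ?thesis by linarith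
  qed
  also have "\<dots> = - (M + 1)"
    using \<open>c > 0\<close> \<open>K > 0\<close> \<open>s > 0\<close> by (simp add: charge_ratio_threshold_def M_def c_def)
  finally have initial: "r 0 * h 0 + M < 0" by simp
  have "M \<ge> 0" by (simp add: M_def)
  have r_pos: "0 < r V" and r_le: "r V \<le> rp" if "V \<in> {0..1}" for V
    using r_bounds that \<open>rp > 0\<close> by fastforce+
  show ?thesis
    by (rule Sup_lt_zero_if_rh_initially_negative[where r = r and h = h and
          D = "\<lambda>V. - (1/4) * (1 - (Q V)\<^sup>2 / (r V)\<^sup>2 - \<Lambda> * (r V)\<^sup>2)",
          OF _ source_le \<open>M \<ge> 0\<close> initial r_pos r_le])
       (use wave in auto)
qed

theorem mainTheorem1:
  fixes K L s :: real
  assumes "K > 0" and "L < 3" and "s > 0"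
  shows "\<exists>C>0. \<forall>(\<Lambda>::real) (e::real) (q::real) (rp::real) (Qmax::real)
            (r::real\<Rightarrow>real) (r'::real\<Rightarrow>real) (Q::real\<Rightarrow>real)
            (h::real\<Rightarrow>real) (h'::real\<Rightarrow>real).
     e > 0 \<and> 0 < q \<and> q \<le> 1 \<and> rp > 0 \<and> Qmax > 0 \<and>
     \<Lambda> * rp\<^sup>2 = L \<and> Qmax / rp = s \<and>
     (\<forall>V\<in>{0..1}. (r has_real_derivative r' V) (at V within {0..1})) \<and>
     continuous_on {0..1} r' \<and> (\<forall>V\<in>{0..1}. r V > 0) \<and>
     continuous_on {0..1} Q \<and>
     (\<forall>V\<in>{0..1}. (h has_real_derivative h' V) (at V within {0..1})) \<and>
     continuous_on {0..1} h' \<and>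
     (\<forall>V\<in>{0..1}. rp / 2 \<le> r V \<and> r V \<le> rp) \<and>
     (\<forall>V\<in>{0..1}. \<bar>Q V\<bar> \<le> q * Qmax) \<and>
     (\<forall>V\<in>{0..1}. ((\<lambda>x. r x * h x) has_real_derivative
          (- (1/4) * (1 - (Q V)\<^sup>2 / (r V)\<^sup>2 - \<Lambda> * (r V)\<^sup>2))) (at V within {0..1})) \<and>
     r' 0 > 0 \<and> h 0 = (\<Lambda> * (r 0)\<^sup>2 / 3 - 1) / (4 * r' 0) \<and>
     r' 0 \<le> K * q / e \<and>
     e * rp\<^sup>2 / (q * Qmax) > C
     \<longrightarrow> (SUP V\<in>{0..1}. h V) < 0"
proof (intro exI[of _ "charge_ratio_threshold K L s"] conjI allI impI)
  show "charge_ratio_threshold K L s > 0"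
    using assms by (rule charge_ratio_threshold_pos)
qed (elim conjE, rule Sup_lt_zero_if_charge_ratio_large[OF assms]; assumption)

end
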